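(* (Sector condition.) For every $\alpha>0$, $N\ge1$ and every pair of functions $F,H:E_N\to\mathbb R$, $$\langle\mathcal LF,H\rangle_{\mu_N}^2\le 4L^2\,D_N(F)\,D_N(H).$$
   Context: Fix an integer $L\ge2$ and let $\mathbb T_L=\mathbb Z/L\mathbb Z$. Fix $\alpha>0$; set $a(0)=1$, $a(n)=n^\alpha$ for $n\ge1$, $g(0)=0$ and $g(n)=a(n)/a(n-1)$ for $n\ge1$. $E_N=\{\eta\in\{0,1,2,\dots\}^{\mathbb T_L}:\sum_x\eta_x=N\}$; $\sigma^{x,y}\eta$ is obtained from $\eta$ by moving one particle from $x$ to $y$. Generator: $(\mathcal LF)(\eta)=\sum_{x\in\mathbb T_L}g(\eta_x)[F(\sigma^{x,x+1}\eta)-F(\eta)]$. Invariant measure $\mu_N(\eta)=W_N^{-1}\prod_xa(\eta_x)^{-1}$, $W_N=\sum_{\zeta\in E_N}\prod_xa(\zeta_x)^{-1}$; $\langle\cdot,\cdot\rangle_{\mu_N}$ is the $L^2(\mu_N)$ inner product; $D_N(F)=\frac12\sum_x\sum_{\eta\in E_N}\mu_N(\eta)g(\eta_x)[F(\sigma^{x,x+1}\eta)-F(\eta)]^2$. *)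

theory Defs
  imports Complex_Main
begin

text \<open>Torus T_L is represented by sites 0..L-1 with successor (x+1) mod L.
Configurations are functions nat => nat vanishing outside {0..<L}.\<close>

definition a_w :: "real \<Rightarrow> nat \<Rightarrow> real" where
  "a_w \<alpha> n = (if n = 0 then 1 else real n powr \<alpha>)"

definition g_r :: "real \<Rightarrow> nat \<Rightarrow> real" where
  "g_r \<alpha> n = (if n = 0 then 0 else a_w \<alpha> n / a_w \<alpha> (n - 1))"

definition E_conf :: "nat \<Rightarrow> nat \<Rightarrow> (nat \<Rightarrow> nat) set" where
  "E_conf L N = {\<eta>. (\<forall>x\<ge>L. \<eta> x = 0) \<and> (\<Sum>x<L. \<eta> x) = N}"

definition sigma_mv :: "nat \<Rightarrow> nat \<Rightarrow> (nat \<Rightarrow> nat) \<Rightarrow> (nat \<Rightarrow> nat)" where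
  "sigma_mv x y \<eta> = \<eta>(x := \<eta> x - 1, y := \<eta> y + 1)"

definition W_part :: "real \<Rightarrow> nat \<Rightarrow> nat \<Rightarrow> real" where
  "W_part \<alpha> L N = (\<Sum>\<zeta>\<in>E_conf L N. \<Prod>x<L. inverse (a_w \<alpha> (\<zeta> x)))"

definition mu_N :: "real \<Rightarrow> nat \<Rightarrow> nat \<Rightarrow> (nat \<Rightarrow> nat) \<Rightarrow> real" where
  "mu_N \<alpha> L N \<eta> = inverse (W_part \<alpha> L N) * (\<Prod>x<L. inverse (a_w \<alpha> (\<eta> x)))"

definition gen_L :: "real \<Rightarrow> nat \<Rightarrow> ((nat \<Rightarrow> nat) \<Rightarrow> real) \<Rightarrow> (nat \<Rightarrow> nat) \<Rightarrow> real" where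
  "gen_L \<alpha> L F \<eta> = (\<Sum>x<L. g_r \<alpha> (\<eta> x) * (F (sigma_mv x ((x + 1) mod L) \<eta>) - F \<eta>))"

definition inner_mu :: "real \<Rightarrow> nat \<Rightarrow> nat \<Rightarrow> ((nat \<Rightarrow> nat) \<Rightarrow> real) \<Rightarrow> ((nat \<Rightarrow> nat) \<Rightarrow> real) \<Rightarrow> real" where
  "inner_mu \<alpha> L N F H = (\<Sum>\<eta>\<in>E_conf L N. mu_N \<alpha> L N \<eta> * F \<eta> * H \<eta>)"

definition dirichlet :: "real \<Rightarrow> nat \<Rightarrow> nat \<Rightarrow> ((nat \<Rightarrow> nat) \<Rightarrow> real) \<Rightarrow> real" where
  "dirichlet \<alpha> L N F = 1/2 * (\<Sum>x<L. \<Sum>\<eta>\<in>E_conf L N.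
      mu_N \<alpha> L N \<eta> * g_r \<alpha> (\<eta> x) * (F (sigma_mv x ((x + 1) mod L) \<eta>) - F \<eta>)^2)"

end

theory Submission
  imports Defs "HOL-Analysis.Convex"
begin

(* Every configuration eta with a particle at x is  rho + delta_x  for a unique rho with
   N-1 particles, and the jump from x to x+1 turns it into  rho + delta_(x+1).  Moreover
   mu_N(rho + delta_x) g(rho_x + 1) = nu(rho) does not depend on x.  Hence both
   <LF, H> and D_N are sums over rho of nu(rho) times quantities on the cycle x = 0..L-1:
   with psi(x) = F(rho + delta_x) and h(x) = H(rho + delta_x),
     <LF,H> = sum_rho nu(rho) sum_x (grad psi)(x) h(x),
     D_N(F) = 1/2 sum_rho nu(rho) sum_x (grad psi)(x)^2,  and likewise D_N(H) with h.
   On the cycle the gradient sums to zero, so h(x) may be replaced by h(x) - h(0); a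
   weighted Cauchy-Schwarz inequality and the Poincare inequality
     sum_x (h x - h 0)^2 <= L^2 sum_x (grad h)(x)^2
   then give the claim. *)

section \<open>Functions on the cycle\<close>

definition grad :: "nat \<Rightarrow> (nat \<Rightarrow> real) \<Rightarrow> nat \<Rightarrow> real" where
  "grad L u x = u ((x + 1) mod L) - u x"

lemma sum_cycle_rotate:
  assumes "L \<ge> 1"
  shows "(\<Sum>x<L. (u :: nat \<Rightarrow> real) ((x + 1) mod L)) = (\<Sum>x<L. u x)"
proof -
  obtain m where L: "L = Suc m" using assms by (cases L) auto
  have "(\<Sum>x<Suc m. u ((x + 1) mod Suc m)) = (\<Sum>x<m. u ((x + 1) mod Suc m)) + u 0"
    by simp
  also have "(\<Sum>x<m. u ((x + 1) mod Suc m)) = (\<Sum>x<m. u (Suc x))"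
    by (rule sum.cong) auto
  also have "(\<Sum>x<m. u (Suc x)) + u 0 = (\<Sum>x<Suc m. u x)"
    by (subst sum.lessThan_Suc_shift) simp
  finally show ?thesis unfolding L .
qed

lemma sum_grad_zero:
  assumes "L \<ge> 1"
  shows "(\<Sum>x<L. grad L u x) = 0"
  using sum_cycle_rotate[OF assms, of u] by (simp add: grad_def sum_subtractf)

text \<open>Poincare inequality on the cycle: walking from 0 to x along at most L edges and
  applying Cauchy-Schwarz to the telescoping sum.\<close>
lemma cycle_poincare:
  assumes "L \<ge> 1"
  shows "(\<Sum>x<L. (u x - u 0)\<^sup>2) \<le> (real L)\<^sup>2 * (\<Sum>x<L. (grad L u x)\<^sup>2)"
proof -
  let ?Q = "\<Sum>w<L. (grad L u w)\<^sup>2"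
  have "(u x - u 0)\<^sup>2 \<le> real L * ?Q" if x: "x < L" for x
  proof -
    have "u x - u 0 = (\<Sum>w<x. u (Suc w) - u w)"
      by (simp add: sum_lessThan_telescope)
    also have "\<dots> = (\<Sum>w<x. grad L u w)"
      by (rule sum.cong) (use x in \<open>auto simp: grad_def\<close>)
    finally have "(u x - u 0)\<^sup>2 \<le> (\<Sum>w<x. (grad L u w)\<^sup>2) * card {..<x}"
      using sum_squared_le_sum_of_squares by metis
    also have "\<dots> \<le> ?Q * real L"
    proof (rule mult_mono)
      show "(\<Sum>w<x. (grad L u w)\<^sup>2) \<le> ?Q"
        by (rule sum_mono2) (use x in auto)
    qed (use x in \<open>auto intro: sum_nonneg\<close>)
    finally show ?thesis by (simp add: mult.commute)
  qed
  then have "(\<Sum>x<L. (u x - u 0)\<^sup>2) \<le> (\<Sum>x<L. real L * ?Q)"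
    by (intro sum_mono) auto
  also have "\<dots> = (real L)\<^sup>2 * ?Q"
    by (simp add: power2_eq_square)
  finally show ?thesis .
qed

lemma weighted_Cauchy_Schwarz:
  fixes w a b :: "'i \<Rightarrow> real"
  assumes "\<And>i. i \<in> I \<Longrightarrow> w i \<ge> 0"
  shows "(\<Sum>i\<in>I. w i * a i * b i)\<^sup>2 \<le> (\<Sum>i\<in>I. w i * (a i)\<^sup>2) * (\<Sum>i\<in>I. w i * (b i)\<^sup>2)"
proof -
  have "(\<Sum>i\<in>I. (sqrt (w i) * a i) * (sqrt (w i) * b i))\<^sup>2
        \<le> (\<Sum>i\<in>I. (sqrt (w i) * a i)\<^sup>2) * (\<Sum>i\<in>I. (sqrt (w i) * b i)\<^sup>2)"
    by (rule Cauchy_Schwarz_ineq_sum)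
  moreover have "(\<Sum>i\<in>I. (sqrt (w i) * a i) * (sqrt (w i) * b i)) = (\<Sum>i\<in>I. w i * a i * b i)"
    by (rule sum.cong) (simp_all add: assms mult_ac flip: power2_eq_square)
  moreover have "(\<Sum>i\<in>I. (sqrt (w i) * c i)\<^sup>2) = (\<Sum>i\<in>I. w i * (c i)\<^sup>2)" for c
    by (rule sum.cong) (simp_all add: power_mult_distrib assms)
  ultimately show ?thesis by simp
qed

lemma cycle_sector:
  fixes w :: "'r \<Rightarrow> real" and \<psi> h :: "'r \<Rightarrow> nat \<Rightarrow> real"
  assumes "finite A" and w_nonneg: "\<And>r. r \<in> A \<Longrightarrow> w r \<ge> 0" and "L \<ge> 1"
  shows "(\<Sum>r\<in>A. w r * (\<Sum>x<L. grad L (\<psi> r) x * h r x))\<^sup>2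
         \<le> (real L)\<^sup>2 * (\<Sum>r\<in>A. w r * (\<Sum>x<L. (grad L (\<psi> r) x)\<^sup>2))
                      * (\<Sum>r\<in>A. w r * (\<Sum>x<L. (grad L (h r) x)\<^sup>2))"
proof -
  let ?I = "A \<times> {..<L}" and ?w = "\<lambda>p. w (fst p)"
  let ?f = "\<lambda>p. grad L (\<psi> (fst p)) (snd p)" and ?g = "\<lambda>p. h (fst p) (snd p) - h (fst p) 0"
  have flatten: "(\<Sum>r\<in>A. w r * (\<Sum>x<L. u r x)) = (\<Sum>p\<in>?I. ?w p * u (fst p) (snd p))" for u
    using \<open>finite A\<close> by (simp add: sum.cartesian_product sum_distrib_left case_prod_beta)
  text \<open>Since the gradient sums to zero, h may be shifted by its value at 0.\<close>
  have shift: "(\<Sum>x<L. grad L (\<psi> r) x * h r x) = (\<Sum>x<L. grad L (\<psi> r) x * (h r x - h r 0))" for r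
    using sum_grad_zero[OF \<open>L \<ge> 1\<close>, of "\<psi> r"]
    by (simp add: right_diff_distrib sum_subtractf sum_distrib_right[symmetric])
  have "(\<Sum>r\<in>A. w r * (\<Sum>x<L. grad L (\<psi> r) x * h r x))\<^sup>2 = (\<Sum>p\<in>?I. ?w p * ?f p * ?g p)\<^sup>2"
    by (simp add: shift flatten mult.assoc)
  also have "\<dots> \<le> (\<Sum>p\<in>?I. ?w p * (?f p)\<^sup>2) * (\<Sum>p\<in>?I. ?w p * (?g p)\<^sup>2)"
    by (rule weighted_Cauchy_Schwarz) (auto intro: w_nonneg)
  also have "\<dots> \<le> (\<Sum>p\<in>?I. ?w p * (?f p)\<^sup>2)
                  * ((real L)\<^sup>2 * (\<Sum>r\<in>A. w r * (\<Sum>x<L. (grad L (h r) x)\<^sup>2)))"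
  proof (rule mult_left_mono)
    have "(\<Sum>p\<in>?I. ?w p * (?g p)\<^sup>2) = (\<Sum>r\<in>A. w r * (\<Sum>x<L. (h r x - h r 0)\<^sup>2))"
      by (simp add: flatten)
    also have "\<dots> \<le> (\<Sum>r\<in>A. w r * ((real L)\<^sup>2 * (\<Sum>x<L. (grad L (h r) x)\<^sup>2)))"
      by (intro sum_mono mult_left_mono cycle_poincare \<open>L \<ge> 1\<close> w_nonneg)
    finally show "(\<Sum>p\<in>?I. ?w p * (?g p)\<^sup>2) \<le> (real L)\<^sup>2 * (\<Sum>r\<in>A. w r * (\<Sum>x<L. (grad L (h r) x)\<^sup>2))"
      by (simp add: sum_distrib_left mult_ac)
    show "0 \<le> (\<Sum>p\<in>?I. ?w p * (?f p)\<^sup>2)"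
      by (auto intro!: sum_nonneg mult_nonneg_nonneg w_nonneg)
  qed
  also have "\<dots> = (real L)\<^sup>2 * (\<Sum>r\<in>A. w r * (\<Sum>x<L. (grad L (\<psi> r) x)\<^sup>2))
                    * (\<Sum>r\<in>A. w r * (\<Sum>x<L. (grad L (h r) x)\<^sup>2))"
    unfolding flatten by (simp only: mult.commute mult.left_commute)
  finally show ?thesis .
qed

section \<open>Configurations with one marked particle\<close>

lemma a_w_pos: "a_w \<alpha> n > 0"
  by (simp add: a_w_def)

text \<open>Each occupation number is at most N, so there are finitely many configurations.\<close>
lemma finite_E_conf: "finite (E_conf L N)"
proof -
  let ?ext = "\<lambda>f x. if x < L then f x else 0"
  have "E_conf L N \<subseteq> ?ext ` (PiE {..<L} (\<lambda>_. {..N}))"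
  proof
    fix \<eta> assume "\<eta> \<in> E_conf L N"
    then have zero: "\<forall>x\<ge>L. \<eta> x = 0" and total: "(\<Sum>x<L. \<eta> x) = N"
      by (auto simp: E_conf_def)
    have "\<eta> x \<le> N" if "x < L" for x
      using member_le_sum[of x "{..<L}" \<eta>] that total by auto
    then have "restrict \<eta> {..<L} \<in> PiE {..<L} (\<lambda>_. {..N})" by auto
    moreover have "\<eta> = ?ext (restrict \<eta> {..<L})"
      using zero by (auto simp: fun_eq_iff)
    ultimately show "\<eta> \<in> ?ext ` (PiE {..<L} (\<lambda>_. {..N}))" by blast
  qed
  then show ?thesis by (rule finite_subset) (auto intro: finite_PiE)
qed

definition add_particle :: "nat \<Rightarrow> (nat \<Rightarrow> nat) \<Rightarrow> (nat \<Rightarrow> nat)" where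
  "add_particle x \<rho> = \<rho>(x := \<rho> x + 1)"

text \<open>Since g vanishes on empty sites, a sum weighted by g(eta_x) runs over configurations
  with a particle at x, i.e. over rho + delta_x with rho having N-1 particles.\<close>
lemma sum_occupied_reindex:
  assumes "x < L" "N \<ge> 1"
  shows "(\<Sum>\<eta>\<in>E_conf L N. g_r \<alpha> (\<eta> x) * \<phi> \<eta>) =
         (\<Sum>\<rho>\<in>E_conf L (N - 1). g_r \<alpha> (\<rho> x + 1) * \<phi> (add_particle x \<rho>))"
proof -
  have inj: "inj_on (add_particle x) (E_conf L (N - 1))"
    by (rule inj_onI) (metis add_particle_def fun_upd_apply fun_upd_triv fun_upd_upd add_right_cancel)
  have count: "(\<Sum>y<L. (\<rho>(x := k)) y) + \<rho> x = (\<Sum>y<L. \<rho> y) + k" for \<rho> :: "nat \<Rightarrow> nat" and k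
    using assms(1) by (simp add: sum.remove[of "{..<L}" x])
  have image: "add_particle x ` E_conf L (N - 1) = {\<eta>\<in>E_conf L N. \<eta> x \<ge> 1}"
  proof (rule set_eqI, rule iffI)
    fix \<eta> assume "\<eta> \<in> add_particle x ` E_conf L (N - 1)"
    then obtain \<rho> where "\<rho> \<in> E_conf L (N - 1)" "\<eta> = add_particle x \<rho>" by auto
    then show "\<eta> \<in> {\<eta>\<in>E_conf L N. \<eta> x \<ge> 1}"
      using count[of \<rho> "\<rho> x + 1"] assms by (auto simp: E_conf_def add_particle_def)
  next
    fix \<eta> assume \<eta>: "\<eta> \<in> {\<eta>\<in>E_conf L N. \<eta> x \<ge> 1}"
    let ?\<rho> = "\<eta>(x := \<eta> x - 1)"
    have "?\<rho> \<in> E_conf L (N - 1)"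
      using count[of \<eta> "\<eta> x - 1"] \<eta> assms by (auto simp: E_conf_def)
    moreover have "\<eta> = add_particle x ?\<rho>" using \<eta> by (auto simp: add_particle_def)
    ultimately show "\<eta> \<in> add_particle x ` E_conf L (N - 1)" by blast
  qed
  have "(\<Sum>\<rho>\<in>E_conf L (N - 1). g_r \<alpha> (\<rho> x + 1) * \<phi> (add_particle x \<rho>))
      = (\<Sum>\<eta>\<in>add_particle x ` E_conf L (N - 1). g_r \<alpha> (\<eta> x) * \<phi> \<eta>)"
    by (subst sum.reindex[OF inj]) (simp add: add_particle_def)
  also have "\<dots> = (\<Sum>\<eta>\<in>E_conf L N. g_r \<alpha> (\<eta> x) * \<phi> \<eta>)"
    unfolding image by (rule sum.mono_neutral_left) (auto simp: finite_E_conf g_r_def)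
  finally show ?thesis by simp
qed

text \<open>The weight mu_N(rho + delta_x) g(rho_x + 1), which does not depend on x.\<close>
definition nu :: "real \<Rightarrow> nat \<Rightarrow> nat \<Rightarrow> (nat \<Rightarrow> nat) \<Rightarrow> real" where
  "nu \<alpha> L N \<rho> = inverse (W_part \<alpha> L N) * (\<Prod>z<L. inverse (a_w \<alpha> (\<rho> z)))"

lemma nu_nonneg: "nu \<alpha> L N \<rho> \<ge> 0"
proof -
  have "W_part \<alpha> L N \<ge> 0"
    unfolding W_part_def by (intro sum_nonneg prod_nonneg) (simp add: less_imp_le a_w_pos)
  then show ?thesis
    unfolding nu_def by (intro mult_nonneg_nonneg prod_nonneg) (simp_all add: less_imp_le a_w_pos)
qed

text \<open>The factor a(rho_x + 1) in mu_N cancels against g(rho_x + 1) = a(rho_x + 1) / a(rho_x).\<close>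
lemma mu_N_add_particle:
  assumes "x < L"
  shows "mu_N \<alpha> L N (add_particle x \<rho>) * g_r \<alpha> (\<rho> x + 1) = nu \<alpha> L N \<rho>"
proof -
  let ?rest = "\<Prod>z\<in>{..<L}-{x}. inverse (a_w \<alpha> (\<rho> z))"
  have shifted: "(\<Prod>z<L. inverse (a_w \<alpha> (add_particle x \<rho> z))) = inverse (a_w \<alpha> (\<rho> x + 1)) * ?rest"
    using assms by (simp add: prod.remove[of "{..<L}" x] add_particle_def)
  have unshifted: "(\<Prod>z<L. inverse (a_w \<alpha> (\<rho> z))) = inverse (a_w \<alpha> (\<rho> x)) * ?rest"
    using assms by (simp add: prod.remove[of "{..<L}" x])
  have "a_w \<alpha> (\<rho> x + 1) > 0" "a_w \<alpha> (\<rho> x) > 0" by (rule a_w_pos)+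
  then show ?thesis
    unfolding mu_N_def nu_def g_r_def shifted unshifted by (simp add: field_simps)
qed

lemma sigma_mv_add_particle:
  assumes "y \<noteq> x"
  shows "sigma_mv x y (add_particle x \<rho>) = add_particle y \<rho>"
  using assms by (auto simp: sigma_mv_def add_particle_def fun_eq_iff)

lemma sum_jumps_reindex:
  assumes "L \<ge> 2" "N \<ge> 1"
  shows "(\<Sum>x<L. \<Sum>\<eta>\<in>E_conf L N. mu_N \<alpha> L N \<eta> * g_r \<alpha> (\<eta> x) * \<Phi> x \<eta> (sigma_mv x ((x + 1) mod L) \<eta>))
       = (\<Sum>\<rho>\<in>E_conf L (N - 1). nu \<alpha> L N \<rho> *
            (\<Sum>x<L. \<Phi> x (add_particle x \<rho>) (add_particle ((x + 1) mod L) \<rho>)))"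
proof -
  have per_site: "(\<Sum>\<eta>\<in>E_conf L N. mu_N \<alpha> L N \<eta> * g_r \<alpha> (\<eta> x) * \<Phi> x \<eta> (sigma_mv x ((x + 1) mod L) \<eta>))
     = (\<Sum>\<rho>\<in>E_conf L (N - 1). nu \<alpha> L N \<rho> * \<Phi> x (add_particle x \<rho>) (add_particle ((x + 1) mod L) \<rho>))"
    if x: "x < L" for x
  proof -
    have neighbour: "(x + 1) mod L \<noteq> x"
      using x assms(1) by (cases "x + 1 = L") auto
    have "(\<Sum>\<eta>\<in>E_conf L N. mu_N \<alpha> L N \<eta> * g_r \<alpha> (\<eta> x) * \<Phi> x \<eta> (sigma_mv x ((x + 1) mod L) \<eta>))
      = (\<Sum>\<eta>\<in>E_conf L N. g_r \<alpha> (\<eta> x) * (mu_N \<alpha> L N \<eta> * \<Phi> x \<eta> (sigma_mv x ((x + 1) mod L) \<eta>)))"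
      by (simp add: mult_ac)
    also have "\<dots> = (\<Sum>\<rho>\<in>E_conf L (N - 1). g_r \<alpha> (\<rho> x + 1) * (mu_N \<alpha> L N (add_particle x \<rho>)
                      * \<Phi> x (add_particle x \<rho>) (sigma_mv x ((x + 1) mod L) (add_particle x \<rho>))))"
      by (rule sum_occupied_reindex[OF x assms(2)])
    also have "\<dots> = (\<Sum>\<rho>\<in>E_conf L (N - 1). nu \<alpha> L N \<rho> * \<Phi> x (add_particle x \<rho>) (add_particle ((x + 1) mod L) \<rho>))"
      by (rule sum.cong[OF refl])
        (simp only: sigma_mv_add_particle[OF neighbour] mu_N_add_particle[OF x, symmetric] mult_ac)
    finally show ?thesis .
  qed
  have "(\<Sum>x<L. \<Sum>\<eta>\<in>E_conf L N. mu_N \<alpha> L N \<eta> * g_r \<alpha> (\<eta> x) * \<Phi> x \<eta> (sigma_mv x ((x + 1) mod L) \<eta>))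
     = (\<Sum>x<L. \<Sum>\<rho>\<in>E_conf L (N - 1). nu \<alpha> L N \<rho> * \<Phi> x (add_particle x \<rho>) (add_particle ((x + 1) mod L) \<rho>))"
    by (rule sum.cong[OF refl], rule per_site) simp
  also have "\<dots> = (\<Sum>\<rho>\<in>E_conf L (N - 1). nu \<alpha> L N \<rho> *
                    (\<Sum>x<L. \<Phi> x (add_particle x \<rho>) (add_particle ((x + 1) mod L) \<rho>)))"
    by (subst sum.swap) (simp add: sum_distrib_left)
  finally show ?thesis .
qed

section \<open>The sector condition\<close>

lemma dirichlet_repr:
  assumes "L \<ge> 2" "N \<ge> 1"
  shows "dirichlet \<alpha> L N F = 1/2 * (\<Sum>\<rho>\<in>E_conf L (N - 1). nu \<alpha> L N \<rho> *
            (\<Sum>x<L. (grad L (\<lambda>y. F (add_particle y \<rho>)) x)\<^sup>2))"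
  using sum_jumps_reindex[OF assms, of \<alpha> "\<lambda>x \<eta> \<xi>. (F \<xi> - F \<eta>)\<^sup>2"]
  by (simp add: dirichlet_def grad_def)

lemma inner_gen_repr:
  assumes "L \<ge> 2" "N \<ge> 1"
  shows "inner_mu \<alpha> L N (gen_L \<alpha> L F) H = (\<Sum>\<rho>\<in>E_conf L (N - 1). nu \<alpha> L N \<rho> *
            (\<Sum>x<L. grad L (\<lambda>y. F (add_particle y \<rho>)) x * H (add_particle x \<rho>)))"
proof -
  have "inner_mu \<alpha> L N (gen_L \<alpha> L F) H = (\<Sum>\<eta>\<in>E_conf L N. \<Sum>x<L. mu_N \<alpha> L N \<eta> * g_r \<alpha> (\<eta> x) *
          ((F (sigma_mv x ((x + 1) mod L) \<eta>) - F \<eta>) * H \<eta>))"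
    unfolding inner_mu_def gen_L_def
    by (rule sum.cong[OF refl]) (simp only: sum_distrib_left sum_distrib_right mult.assoc)
  also have "\<dots> = (\<Sum>x<L. \<Sum>\<eta>\<in>E_conf L N. mu_N \<alpha> L N \<eta> * g_r \<alpha> (\<eta> x) *
          ((F (sigma_mv x ((x + 1) mod L) \<eta>) - F \<eta>) * H \<eta>))"
    by (rule sum.swap)
  also have "\<dots> = (\<Sum>\<rho>\<in>E_conf L (N - 1). nu \<alpha> L N \<rho> *
            (\<Sum>x<L. grad L (\<lambda>y. F (add_particle y \<rho>)) x * H (add_particle x \<rho>)))"
    using sum_jumps_reindex[OF assms, of \<alpha> "\<lambda>x \<eta> \<xi>. (F \<xi> - F \<eta>) * H \<eta>"]
    by (simp add: grad_def)
  finally show ?thesis .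
qed

theorem lemma3p1:
  fixes \<alpha> :: real and L N :: nat and F H :: "(nat \<Rightarrow> nat) \<Rightarrow> real"
  assumes "L \<ge> 2" and "\<alpha> > 0" and "N \<ge> 1"
  shows "(inner_mu \<alpha> L N (gen_L \<alpha> L F) H)^2
           \<le> 4 * (real L)^2 * dirichlet \<alpha> L N F * dirichlet \<alpha> L N H"
proof -
  let ?\<psi> = "\<lambda>\<rho> y. F (add_particle y \<rho>)" and ?h = "\<lambda>\<rho> y. H (add_particle y \<rho>)"
  have "(\<Sum>\<rho>\<in>E_conf L (N - 1). nu \<alpha> L N \<rho> * (\<Sum>x<L. grad L (?\<psi> \<rho>) x * ?h \<rho> x))\<^sup>2
        \<le> (real L)\<^sup>2 * (\<Sum>\<rho>\<in>E_conf L (N - 1). nu \<alpha> L N \<rho> * (\<Sum>x<L. (grad L (?\<psi> \<rho>) x)\<^sup>2))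
                     * (\<Sum>\<rho>\<in>E_conf L (N - 1). nu \<alpha> L N \<rho> * (\<Sum>x<L. (grad L (?h \<rho>) x)\<^sup>2))"
    by (rule cycle_sector[OF finite_E_conf nu_nonneg]) (use assms(1) in simp)
  then show ?thesis
    unfolding inner_gen_repr[OF assms(1,3)] dirichlet_repr[OF assms(1,3)] by (simp add: algebra_simps)
qed

end
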